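(* Let $(Q,P)$ be a weakly quasi-lattice ordered group and let $\Lambda$ be a $P$-graph with $\mathrm{FA}(\Lambda)\neq\emptyset$. For any $\lambda\in\Lambda$, the following are equivalent: (1) $\lambda\in\mathrm{FA}(\Lambda)$; (2) the set $Z(\lambda)=\{x\in\mathcal{F}(\Lambda):\lambda\in x\}$ is compact.
   Context: $(Q,P)$ weakly quasi-lattice ordered: $Q$ a discrete group, $P\subseteq Q$ a subsemigroup containing the identity $e$ with $P\cap P^{-1}=\{e\}$, and, with $p\le r$ meaning $pq=r$ for some $q\in P$, any two elements of $P$ with a common upper bound have a least common upper bound. A $P$-graph is a countable small category $\Lambda$ (range/source $r,s$) with a functor $d:\Lambda\to P$ with unique factorisation (if $d(\lambda)=pq$ there are unique $\mu,\nu$ with $\lambda=\mu\nu$, $d(\mu)=p$, $d(\nu)=q$). Write $\lambda\Lambda=\{\lambda\mu: s(\lambda)=r(\mu)\}$, $\mu\preceq\lambda$ iff $\lambda\in\mu\Lambda$. $\mathrm{FA}(\Lambda)$ is the set of $\lambda$ such that for all $\mu\in\lambda\Lambda,\nu\in\Lambda$ there is a finite $J\subseteq\Lambda$ with $\mu\Lambda\cap\nu\Lambda=\bigcup_{\kappa\in J}\kappa\Lambda$. A filter is a nonempty subset $x\subseteq\Lambda$ that is hereditary ($\lambda\preceq\mu\in x\Rightarrow\lambda\in x$) and directed ($\mu,\nu\in x$ implies some $\lambda\in x$ with $\mu,\nu\preceq\lambda$); $\mathcal{F}(\Lambda)$ is the set of filters, with the subspace topology from $\mathcal{P}(\Lambda)$,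 which carries the product topology from $\{0,1\}^\Lambda$ (basis: $\{x: K_1\subseteq x\subseteq\Lambda\setminus K_2\}$ for finite $K_1,K_2$). *)

theory Defs
  imports "HOL-Analysis.Analysis" "HOL-Algebra.Group"
begin

definition wqlo_le :: "('q, 'm) monoid_scheme \<Rightarrow> 'q set \<Rightarrow> 'q \<Rightarrow> 'q \<Rightarrow> bool" where
  "wqlo_le G P p r \<longleftrightarrow> (\<exists>q\<in>P. p \<otimes>\<^bsub>G\<^esub> q = r)"

definition wqlo :: "('q, 'm) monoid_scheme \<Rightarrow> 'q set \<Rightarrow> bool" where
  "wqlo G P \<longleftrightarrow> group G \<and> P \<subseteq> carrier G \<and> \<one>\<^bsub>G\<^esub> \<in> P
     \<and> (\<forall>p\<in>P. \<forall>q\<in>P. p \<otimes>\<^bsub>G\<^esub> q \<in> P)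
     \<and> {p \<in> P. inv\<^bsub>G\<^esub> p \<in> P} = {\<one>\<^bsub>G\<^esub>}
     \<and> (\<forall>p\<in>P. \<forall>q\<in>P. (\<exists>r\<in>P. wqlo_le G P p r \<and> wqlo_le G P q r) \<longrightarrow>
          (\<exists>l\<in>P. wqlo_le G P p l \<and> wqlo_le G P q l \<and>
             (\<forall>r\<in>P. wqlo_le G P p r \<and> wqlo_le G P q r \<longrightarrow> wqlo_le G P l r)))"

text \<open>L is the set of morphisms, r / s give the range / source (an identity
  morphism), c is composition: c la \<mu> is la\<mu> (defined when s la = r \<mu>).\<close>
definition small_category ::
  "'a set \<Rightarrow> ('a \<Rightarrow> 'a) \<Rightarrow> ('a \<Rightarrow> 'a) \<Rightarrow> ('a \<Rightarrow> 'a \<Rightarrow> 'a) \<Rightarrow> bool" where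
  "small_category L r s c \<longleftrightarrow>
     (\<forall>la\<in>L. r la \<in> L \<and> s la \<in> L
        \<and> r (r la) = r la \<and> s (r la) = r la \<and> r (s la) = s la \<and> s (s la) = s la
        \<and> c (r la) la = la \<and> c la (s la) = la)
   \<and> (\<forall>la\<in>L. \<forall>\<mu>\<in>L. s la = r \<mu> \<longrightarrow>
        c la \<mu> \<in> L \<and> r (c la \<mu>) = r la \<and> s (c la \<mu>) = s \<mu>)
   \<and> (\<forall>la\<in>L. \<forall>\<mu>\<in>L. \<forall>\<nu>\<in>L. s la = r \<mu> \<longrightarrow> s \<mu> = r \<nu> \<longrightarrow>
        c (c la \<mu>) \<nu> = c la (c \<mu> \<nu>))"

definition P_graph ::
  "('q, 'm) monoid_scheme \<Rightarrow> 'q set \<Rightarrow> 'a set \<Rightarrow> ('a \<Rightarrow> 'a) \<Rightarrow> ('a \<Rightarrow> 'a)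
     \<Rightarrow> ('a \<Rightarrow> 'a \<Rightarrow> 'a) \<Rightarrow> ('a \<Rightarrow> 'q) \<Rightarrow> bool" where
  "P_graph G P L r s c d \<longleftrightarrow>
     countable L \<and> small_category L r s c
   \<and> (\<forall>la\<in>L. d la \<in> P)
   \<and> (\<forall>la\<in>L. d (s la) = \<one>\<^bsub>G\<^esub>)
   \<and> (\<forall>la\<in>L. \<forall>\<mu>\<in>L. s la = r \<mu> \<longrightarrow> d (c la \<mu>) = d la \<otimes>\<^bsub>G\<^esub> d \<mu>)
   \<and> (\<forall>la\<in>L. \<forall>p\<in>P. \<forall>q\<in>P. d la = p \<otimes>\<^bsub>G\<^esub> q \<longrightarrow>
        (\<exists>!(\<mu>, \<nu>). \<mu> \<in> L \<and> \<nu> \<in> L \<and> s \<mu> = r \<nu> \<and> la = c \<mu> \<nu> \<and> d \<mu> = p \<and> d \<nu> = q))"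

definition ext_set :: "'a set \<Rightarrow> ('a \<Rightarrow> 'a) \<Rightarrow> ('a \<Rightarrow> 'a) \<Rightarrow> ('a \<Rightarrow> 'a \<Rightarrow> 'a) \<Rightarrow> 'a \<Rightarrow> 'a set" where
  "ext_set L r s c la = {c la \<mu> | \<mu>. \<mu> \<in> L \<and> s la = r \<mu>}"

definition prec :: "'a set \<Rightarrow> ('a \<Rightarrow> 'a) \<Rightarrow> ('a \<Rightarrow> 'a) \<Rightarrow> ('a \<Rightarrow> 'a \<Rightarrow> 'a) \<Rightarrow> 'a \<Rightarrow> 'a \<Rightarrow> bool" where
  "prec L r s c \<mu> la \<longleftrightarrow> la \<in> ext_set L r s c \<mu>"

definition FA :: "'a set \<Rightarrow> ('a \<Rightarrow> 'a) \<Rightarrow> ('a \<Rightarrow> 'a) \<Rightarrow> ('a \<Rightarrow> 'a \<Rightarrow> 'a) \<Rightarrow> 'a set" where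
  "FA L r s c = {la \<in> L. \<forall>\<mu> \<in> ext_set L r s c la. \<forall>\<nu> \<in> L.
      \<exists>J. finite J \<and> J \<subseteq> L \<and>
        ext_set L r s c \<mu> \<inter> ext_set L r s c \<nu> = (\<Union>\<kappa>\<in>J. ext_set L r s c \<kappa>)}"

definition filters :: "'a set \<Rightarrow> ('a \<Rightarrow> 'a) \<Rightarrow> ('a \<Rightarrow> 'a) \<Rightarrow> ('a \<Rightarrow> 'a \<Rightarrow> 'a) \<Rightarrow> 'a set set" where
  "filters L r s c = {x. x \<subseteq> L \<and> x \<noteq> {}
      \<and> (\<forall>la\<in>L. \<forall>\<mu>\<in>x. prec L r s c la \<mu> \<longrightarrow> la \<in> x)
      \<and> (\<forall>\<mu>\<in>x. \<forall>\<nu>\<in>x. \<exists>la\<in>x. prec L r s c \<mu> la \<and> prec L r s c \<nu> la)}"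

text \<open>Product topology on the power set of L (identified with {0,1}^L),
  given by its standard basis {x : K1 \<subseteq> x \<subseteq> L - K2}, K1, K2 finite.\<close>
definition powerset_top :: "'a set \<Rightarrow> 'a set topology" where
  "powerset_top L = topology_generated_by
     {{x. K1 \<subseteq> x \<and> x \<subseteq> L - K2} | K1 K2. finite K1 \<and> finite K2 \<and> K1 \<subseteq> L \<and> K2 \<subseteq> L}"

definition filter_top :: "'a set \<Rightarrow> ('a \<Rightarrow> 'a) \<Rightarrow> ('a \<Rightarrow> 'a) \<Rightarrow> ('a \<Rightarrow> 'a \<Rightarrow> 'a) \<Rightarrow> 'a set topology" where
  "filter_top L r s c = subtopology (powerset_top L) (filters L r s c)"

definition cylZ :: "'a set \<Rightarrow> ('a \<Rightarrow> 'a) \<Rightarrow> ('a \<Rightarrow> 'a) \<Rightarrow> ('a \<Rightarrow> 'a \<Rightarrow> 'a) \<Rightarrow> 'a \<Rightarrow> 'a set set" where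
  "cylZ L r s c la = {x \<in> filters L r s c. la \<in> x}"

end

(*
  Z(la) sits inside Pow L, which is compact (Alexander's subbase theorem), so it is compact
  as soon as it is closed.

  If la \<in> FA, then Z(la) is closed. A set y \<ni> la that is not a filter either fails heredity,
  which two coordinates witness, or contains m, n without a common extension in y. In the
  latter case let la\<Lambda> \<inter> m\<Lambda> be generated by the finite J1: if y misses J1, so does every
  filter near y, although a filter containing la and m must meet J1; otherwise some k \<in> J1 \<inter> y
  lies in la\<Lambda>, and the same argument with the finite generators J2 of k\<Lambda> \<inter> n\<Lambda> applies,
  since a common element of J2 and y would be a common extension of m and n.

  Conversely, let \<mu> \<in> la\<Lambda> and \<nu> with \<mu>\<Lambda> \<inter> \<nu>\<Lambda> nonempty. The degrees of \<mu> and \<nu> have a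
  least upper bound l, and unique factorisation shows that the paths of degree l in
  \<mu>\<Lambda> \<inter> \<nu>\<Lambda> generate it and form an antichain. The open sets "\<mu> \<notin> x", "\<nu> \<notin> x" and "k \<in> x"
  for these k cover Z(la); the principal filter of k lies in no other member of the cover,
  so compactness leaves only finitely many k.
*)

theory Submission
  imports Defs
begin

definition cylinder :: "'a set \<Rightarrow> 'a set \<Rightarrow> 'a set \<Rightarrow> 'a set set" where
  "cylinder L K1 K2 = {x. K1 \<subseteq> x \<and> x \<subseteq> L - K2}"

definition cylinder_nbhd :: "'a set \<Rightarrow> 'a set \<Rightarrow> 'a set set \<Rightarrow> bool" where
  "cylinder_nbhd L y U \<longleftrightarrow> (\<exists>K1 K2. finite K1 \<and> finite K2 \<and> K1 \<subseteq> L \<and> K2 \<subseteq> L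
     \<and> y \<in> cylinder L K1 K2 \<and> cylinder L K1 K2 \<subseteq> U)"

lemma cylinder_subset_Pow: "cylinder L K1 K2 \<subseteq> Pow L"
  unfolding cylinder_def by blast

lemma cylinder_Int: "cylinder L K1 K2 \<inter> cylinder L K1' K2' = cylinder L (K1 \<union> K1') (K2 \<union> K2')"
  unfolding cylinder_def by blast

lemma cylinder_nbhd_mono: "cylinder_nbhd L y U \<Longrightarrow> U \<subseteq> V \<Longrightarrow> cylinder_nbhd L y V"
  unfolding cylinder_nbhd_def by blast

lemma cylinder_nbhd_Int:
  assumes "cylinder_nbhd L y U" "cylinder_nbhd L y V" shows "cylinder_nbhd L y (U \<inter> V)"
proof -
  obtain K1 K2 where K: "finite K1" "finite K2" "K1 \<subseteq> L" "K2 \<subseteq> L"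
    "y \<in> cylinder L K1 K2" "cylinder L K1 K2 \<subseteq> U"
    using assms(1) unfolding cylinder_nbhd_def by blast
  obtain K1' K2' where K': "finite K1'" "finite K2'" "K1' \<subseteq> L" "K2' \<subseteq> L"
    "y \<in> cylinder L K1' K2'" "cylinder L K1' K2' \<subseteq> V"
    using assms(2) unfolding cylinder_nbhd_def by blast
  have "y \<in> cylinder L (K1 \<union> K1') (K2 \<union> K2')" "cylinder L (K1 \<union> K1') (K2 \<union> K2') \<subseteq> U \<inter> V"
    using K(5,6) K'(5,6) unfolding cylinder_Int[symmetric] by blast+
  with K K' show ?thesis
    unfolding cylinder_nbhd_def by (intro exI[of _ "K1 \<union> K1'"] exI[of _ "K2 \<union> K2'"]) simp
qed

lemma inj_on_cylinder_singleton: "inj_on (\<lambda>k. cylinder L {k} {}) L"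
proof (rule inj_onI)
  fix k k' assume "k \<in> L" "cylinder L {k} {} = cylinder L {k'} {}"
  moreover have "{k} \<in> cylinder L {k} {}"
    using \<open>k \<in> L\<close> unfolding cylinder_def by auto
  ultimately show "k = k'"
    unfolding cylinder_def by auto
qed

lemma powerset_top_cylinders:
  "powerset_top L = topology_generated_by
     {cylinder L K1 K2 | K1 K2. finite K1 \<and> finite K2 \<and> K1 \<subseteq> L \<and> K2 \<subseteq> L}"
  unfolding powerset_top_def cylinder_def ..

lemma openin_powerset_top_cylinder:
  "finite K1 \<Longrightarrow> finite K2 \<Longrightarrow> K1 \<subseteq> L \<Longrightarrow> K2 \<subseteq> L \<Longrightarrow> openin (powerset_top L) (cylinder L K1 K2)"
  unfolding powerset_top_cylinders by (intro topology_generated_by_Basis) blast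

lemma topspace_powerset_top: "topspace (powerset_top L) = Pow L"
proof -
  have "Pow L = cylinder L {} {}"
    unfolding cylinder_def by blast
  then show ?thesis
    unfolding powerset_top_cylinders topology_generated_by_topspace
    using cylinder_subset_Pow[of L] by blast
qed

lemma openin_powerset_top_iff:
  "openin (powerset_top L) U \<longleftrightarrow> (\<forall>y\<in>U. cylinder_nbhd L y U)"
proof
  assume "openin (powerset_top L) U"
  then have "generate_topology_on
      {cylinder L K1 K2 | K1 K2. finite K1 \<and> finite K2 \<and> K1 \<subseteq> L \<and> K2 \<subseteq> L} U"
    unfolding powerset_top_cylinders by (rule openin_topology_generated_by)
  then show "\<forall>y\<in>U. cylinder_nbhd L y U"
  proof induction
    case (Int a b)
    then show ?case
      using cylinder_nbhd_Int by blast
  next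
    case (UN \<K>)
    show ?case
    proof
      fix y assume "y \<in> \<Union>\<K>"
      then obtain S where "S \<in> \<K>" "y \<in> S"
        by blast
      with UN.IH show "cylinder_nbhd L y (\<Union>\<K>)"
        by (meson Union_upper cylinder_nbhd_mono)
    qed
  next
    case (Basis S)
    then obtain K1 K2 where "finite K1" "finite K2" "K1 \<subseteq> L" "K2 \<subseteq> L" "S = cylinder L K1 K2"
      by blast
    then show ?case
      unfolding cylinder_nbhd_def by blast
  qed simp
next
  assume "\<forall>y\<in>U. cylinder_nbhd L y U"
  then show "openin (powerset_top L) U"
    unfolding cylinder_nbhd_def by (subst openin_subopen) (metis openin_powerset_top_cylinder)
qed

lemma cylinder_nbhd_Pow_Int:
  assumes "cylinder_nbhd L y U" shows "cylinder_nbhd L y (Pow L \<inter> U)"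
proof -
  from assms obtain K1 K2 where "finite K1" "finite K2" "K1 \<subseteq> L" "K2 \<subseteq> L"
    "y \<in> cylinder L K1 K2" "cylinder L K1 K2 \<subseteq> U"
    unfolding cylinder_nbhd_def by blast
  with cylinder_subset_Pow[of L K1 K2] show ?thesis
    unfolding cylinder_nbhd_def by (intro exI[of _ K1] exI[of _ K2]) simp
qed

lemma closedin_powerset_top_if_cylinder_nbhds:
  assumes "Z \<subseteq> Pow L" and "\<And>y. y \<subseteq> L \<Longrightarrow> y \<notin> Z \<Longrightarrow> cylinder_nbhd L y (- Z)"
  shows "closedin (powerset_top L) Z"
proof -
  have "cylinder_nbhd L y (Pow L - Z)" if "y \<in> Pow L - Z" for y
    using cylinder_nbhd_Pow_Int[OF assms(2)] that by (simp add: Diff_eq)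
  then have "openin (powerset_top L) (Pow L - Z)"
    unfolding openin_powerset_top_iff by blast
  with assms(1) show ?thesis
    by (simp add: closedin_def topspace_powerset_top)
qed

definition powerset_subbase :: "'a set \<Rightarrow> 'a set set set" where
  "powerset_subbase L = (\<lambda>a. cylinder L {a} {}) ` L \<union> (\<lambda>a. cylinder L {} {a}) ` L"

lemma powerset_top_subbase:
  "topology (arbitrary union_of
     (finite intersection_of (\<lambda>S. S \<in> powerset_subbase L) relative_to Pow L)) = powerset_top L"
proof (rule topology_base_unique)
  fix S assume "(finite intersection_of (\<lambda>S. S \<in> powerset_subbase L) relative_to Pow L) S"
  then obtain \<F> where \<F>: "finite \<F>" "\<F> \<subseteq> powerset_subbase L" and S: "S = Pow L \<inter> \<Inter>\<F>"
    by (auto simp: relative_to_def intersection_of_def)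
  have "openin (powerset_top L) T" if "T \<in> powerset_subbase L" for T
    using that unfolding powerset_subbase_def by (auto intro: openin_powerset_top_cylinder)
  with \<F> have "openin (powerset_top L) (Pow L \<inter> \<Inter>\<F>)"
    by (metis openin_Int_Inter openin_topspace subsetD topspace_powerset_top)
  with S show "openin (powerset_top L) S"
    by simp
next
  fix U y assume "openin (powerset_top L) U" "y \<in> U"
  then have "cylinder_nbhd L y U"
    unfolding openin_powerset_top_iff by blast
  then obtain K1 K2 where K: "finite K1" "finite K2" "K1 \<subseteq> L" "K2 \<subseteq> L"
    and y: "y \<in> cylinder L K1 K2" and sub: "cylinder L K1 K2 \<subseteq> U"
    unfolding cylinder_nbhd_def by blast
  define \<F> where "\<F> = (\<lambda>a. cylinder L {a} {}) ` K1 \<union> (\<lambda>a. cylinder L {} {a}) ` K2"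
  have "finite \<F>" "\<F> \<subseteq> powerset_subbase L"
    using K unfolding \<F>_def powerset_subbase_def by auto
  moreover have "Pow L \<inter> \<Inter>\<F> = cylinder L K1 K2"
    unfolding \<F>_def cylinder_def by auto
  ultimately have "(finite intersection_of (\<lambda>S. S \<in> powerset_subbase L) relative_to Pow L)
      (cylinder L K1 K2)"
    unfolding relative_to_def intersection_of_def by auto
  with y sub show "\<exists>B. (finite intersection_of (\<lambda>S. S \<in> powerset_subbase L) relative_to Pow L) B
      \<and> y \<in> B \<and> B \<subseteq> U"
    by (intro exI[of _ "cylinder L K1 K2"]) simp
qed

lemma compact_space_powerset_top: "compact_space (powerset_top L)"
proof (cases "L = {}")
  case True
  then show ?thesis
    by (simp add: compact_space_def finite_imp_compactin topspace_powerset_top)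
next
  case False
  then obtain a0 where "a0 \<in> L" by blast
  show ?thesis
  proof (rule Alexander_subbase_alt[OF _ _ powerset_top_subbase])
    have "Pow L \<subseteq> cylinder L {a0} {} \<union> cylinder L {} {a0}"
      unfolding cylinder_def by auto
    moreover have "{cylinder L {a0} {}, cylinder L {} {a0}} \<subseteq> powerset_subbase L"
      using \<open>a0 \<in> L\<close> unfolding powerset_subbase_def by auto
    ultimately show "Pow L \<subseteq> \<Union> (powerset_subbase L)"
      by auto
  next
    fix \<C> assume \<C>: "\<C> \<subseteq> powerset_subbase L" "Pow L \<subseteq> \<Union> \<C>"
    \<comment> \<open>The member of the cover containing the set N of all points excluded by the cover
      must be "a \<in> x" for some a \<in> N; together with "a \<notin> x" it covers.\<close>
    define N where "N = {a \<in> L. cylinder L {} {a} \<in> \<C>}"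
    have "N \<in> Pow L"
      unfolding N_def by auto
    then obtain X where X: "X \<in> \<C>" "N \<in> X"
      using \<C>(2) by (meson UnionE subsetD)
    with \<C>(1) have "X \<in> powerset_subbase L"
      by blast
    then obtain a where a: "a \<in> L" "X = cylinder L {a} {} \<or> X = cylinder L {} {a}"
      unfolding powerset_subbase_def by auto
    have "X \<noteq> cylinder L {} {a}"
    proof
      assume "X = cylinder L {} {a}"
      with X a have "a \<in> N" "a \<notin> N"
        unfolding N_def cylinder_def by auto
      then show False by simp
    qed
    with a X have "X = cylinder L {a} {}" "a \<in> N"
      unfolding cylinder_def by auto
    then have "{X, cylinder L {} {a}} \<subseteq> \<C>" "Pow L \<subseteq> \<Union> {X, cylinder L {} {a}}"
      using X unfolding N_def cylinder_def by auto
    then show "\<exists>\<C>'. finite \<C>' \<and> \<C>' \<subseteq> \<C> \<and> Pow L \<subseteq> \<Union> \<C>'"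
      by (intro exI[of _ "{X, cylinder L {} {a}}"]) simp
  qed
qed

definition principal_filter :: "'a set \<Rightarrow> ('a \<Rightarrow> 'a) \<Rightarrow> ('a \<Rightarrow> 'a) \<Rightarrow> ('a \<Rightarrow> 'a \<Rightarrow> 'a) \<Rightarrow> 'a \<Rightarrow> 'a set" where
  "principal_filter L r s c k = {e \<in> L. k \<in> ext_set L r s c e}"

locale small_cat =
  fixes L :: "'a set" and r s :: "'a \<Rightarrow> 'a" and c :: "'a \<Rightarrow> 'a \<Rightarrow> 'a"
  assumes small_category: "small_category L r s c"
begin

abbreviation ext :: "'a \<Rightarrow> 'a set" where
  "ext a \<equiv> ext_set L r s c a"

lemma id_closed: "a \<in> L \<Longrightarrow> r a \<in> L" "a \<in> L \<Longrightarrow> s a \<in> L"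
  using small_category unfolding small_category_def by auto

lemma id_source_range: "a \<in> L \<Longrightarrow> s (r a) = r a" "a \<in> L \<Longrightarrow> r (s a) = s a"
  using small_category unfolding small_category_def by auto

lemma id_comp: "a \<in> L \<Longrightarrow> c (r a) a = a" "a \<in> L \<Longrightarrow> c a (s a) = a"
  using small_category unfolding small_category_def by auto

lemma comp_closed: "a \<in> L \<Longrightarrow> b \<in> L \<Longrightarrow> s a = r b \<Longrightarrow> c a b \<in> L"
  and range_comp: "a \<in> L \<Longrightarrow> b \<in> L \<Longrightarrow> s a = r b \<Longrightarrow> r (c a b) = r a"
  and source_comp: "a \<in> L \<Longrightarrow> b \<in> L \<Longrightarrow> s a = r b \<Longrightarrow> s (c a b) = s b"
  using small_category unfolding small_category_def by auto

lemma comp_assoc: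
  "a \<in> L \<Longrightarrow> b \<in> L \<Longrightarrow> e \<in> L \<Longrightarrow> s a = r b \<Longrightarrow> s b = r e \<Longrightarrow> c (c a b) e = c a (c b e)"
  using small_category unfolding small_category_def by blast

lemma ext_refl: "a \<in> L \<Longrightarrow> a \<in> ext a"
  unfolding ext_set_def using id_closed id_source_range id_comp by force

lemma ext_subset: "a \<in> L \<Longrightarrow> ext a \<subseteq> L"
  unfolding ext_set_def using comp_closed by auto

lemma ext_trans:
  assumes a: "a \<in> L" and b: "b \<in> ext a"
  shows "ext b \<subseteq> ext a"
proof
  fix x assume "x \<in> ext b"
  obtain \<mu> where \<mu>: "\<mu> \<in> L" "s a = r \<mu>" "b = c a \<mu>"
    using b unfolding ext_set_def by auto
  obtain \<nu> where \<nu>: "\<nu> \<in> L" "s b = r \<nu>" "x = c b \<nu>"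
    using \<open>x \<in> ext b\<close> unfolding ext_set_def by auto
  have "s \<mu> = r \<nu>"
    using source_comp a \<mu> \<nu> by simp
  then have "x = c a (c \<mu> \<nu>)" "c \<mu> \<nu> \<in> L" "r (c \<mu> \<nu>) = r \<mu>"
    using comp_assoc comp_closed range_comp a \<mu> \<nu> by simp_all
  with \<mu> show "x \<in> ext a"
    unfolding ext_set_def by auto
qed

lemma filters_subset: "x \<in> filters L r s c \<Longrightarrow> x \<subseteq> L"
  unfolding filters_def by blast

lemma filter_meets_generators:
  assumes x: "x \<in> filters L r s c" and "a \<in> x" "b \<in> x" "J \<subseteq> L"
    and gen: "ext a \<inter> ext b = (\<Union>k\<in>J. ext k)"
  shows "J \<inter> x \<noteq> {}"
proof -
  obtain e where "e \<in> x" "e \<in> ext a \<inter> ext b"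
    using x \<open>a \<in> x\<close> \<open>b \<in> x\<close> unfolding filters_def prec_def by blast
  then obtain k where "k \<in> J" "e \<in> ext k"
    using gen by blast
  with x \<open>e \<in> x\<close> \<open>J \<subseteq> L\<close> have "k \<in> x"
    unfolding filters_def prec_def by blast
  with \<open>k \<in> J\<close> show ?thesis
    by blast
qed

lemma generator_in_ext_Int:
  "k \<in> J \<Longrightarrow> J \<subseteq> L \<Longrightarrow> ext a \<inter> ext b = (\<Union>k\<in>J. ext k) \<Longrightarrow> k \<in> ext a \<inter> ext b"
  using ext_refl by blast

lemma filters_subset_generator_cover:
  assumes "J \<subseteq> L" "ext a \<inter> ext b = (\<Union>k\<in>J. ext k)"
  shows "filters L r s c \<subseteq> \<Union>({cylinder L {} {a}, cylinder L {} {b}} \<union> (\<lambda>k. cylinder L {k} {}) ` J)"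
proof
  fix x assume x: "x \<in> filters L r s c"
  show "x \<in> \<Union>({cylinder L {} {a}, cylinder L {} {b}} \<union> (\<lambda>k. cylinder L {k} {}) ` J)"
  proof (cases "a \<in> x \<and> b \<in> x")
    case True
    then have "J \<inter> x \<noteq> {}"
      using filter_meets_generators[OF x _ _ assms] by simp
    then obtain k where "k \<in> J" "k \<in> x"
      by blast
    then have "x \<in> cylinder L {k} {}" "cylinder L {k} {} \<in> (\<lambda>k. cylinder L {k} {}) ` J"
      using filters_subset[OF x] unfolding cylinder_def by auto
    then show ?thesis
      by blast
  next
    case False
    then have "x \<in> cylinder L {} {a} \<union> cylinder L {} {b}"
      using filters_subset[OF x] unfolding cylinder_def by auto
    then show ?thesis
      by blast
  qed
qed

lemma principal_filter_in_filters:
  assumes "k \<in> L" shows "principal_filter L r s c k \<in> filters L r s c"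
proof -
  let ?y = "principal_filter L r s c k"
  have "?y \<subseteq> L" "k \<in> ?y"
    using assms ext_refl unfolding principal_filter_def by auto
  moreover have "e \<in> ?y" if "e \<in> L" "m \<in> ?y" "prec L r s c e m" for e m
    using that ext_trans unfolding principal_filter_def prec_def by blast
  moreover have "prec L r s c m k" if "m \<in> ?y" for m
    using that unfolding principal_filter_def prec_def by blast
  ultimately show ?thesis
    unfolding filters_def by blast
qed

lemma generators_meet_or_cylinder_nbhd:
  assumes y: "y \<subseteq> L" "a \<in> y" "b \<in> y" and J: "finite J" "J \<subseteq> L"
    and gen: "ext a \<inter> ext b = (\<Union>k\<in>J. ext k)"
  obtains k where "k \<in> J" "k \<in> y" | "cylinder_nbhd L y (- filters L r s c)"
proof (cases "J \<inter> y = {}")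
  case True
  have "y \<in> cylinder L {a, b} J"
    using y True unfolding cylinder_def by auto
  moreover have "cylinder L {a, b} J \<subseteq> - filters L r s c"
  proof
    fix x assume "x \<in> cylinder L {a, b} J"
    then have "a \<in> x" "b \<in> x" "J \<inter> x = {}"
      unfolding cylinder_def by auto
    then show "x \<in> - filters L r s c"
      using filter_meets_generators J(2) gen by blast
  qed
  ultimately have "cylinder_nbhd L y (- filters L r s c)"
    unfolding cylinder_nbhd_def using y J by (intro exI[of _ "{a, b}"] exI[of _ J]) auto
  then show ?thesis
    by (rule that(2))
next
  case False
  then show ?thesis
    using that(1) by blast
qed

lemma cylinder_nbhd_non_directed:
  assumes la: "la \<in> FA L r s c" and y: "y \<subseteq> L" "la \<in> y" "m \<in> y" "n \<in> y"
    and no_ub: "\<not> (\<exists>e\<in>y. prec L r s c m e \<and> prec L r s c n e)"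
  shows "cylinder_nbhd L y (- filters L r s c)"
proof -
  have FA: "\<exists>J. finite J \<and> J \<subseteq> L \<and> ext \<mu> \<inter> ext \<nu> = (\<Union>k\<in>J. ext k)"
    if "\<mu> \<in> ext la" "\<nu> \<in> L" for \<mu> \<nu>
    using la that unfolding FA_def by blast
  have "la \<in> L" "m \<in> L" "n \<in> L"
    using y by auto
  then obtain J1 where J1: "finite J1" "J1 \<subseteq> L" "ext la \<inter> ext m = (\<Union>k\<in>J1. ext k)"
    using FA[OF ext_refl[OF \<open>la \<in> L\<close>] \<open>m \<in> L\<close>] by blast
  show ?thesis
  proof (rule generators_meet_or_cylinder_nbhd[OF y(1,2,3) J1])
    fix k assume "k \<in> J1" "k \<in> y"
    then have "k \<in> ext la" "k \<in> ext m"
      using generator_in_ext_Int[OF _ J1(2,3)] by blast+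
    \<comment> \<open>As k \<in> la\<Lambda>, the hypothesis la \<in> FA also makes k\<Lambda> \<inter> n\<Lambda> finitely generated.\<close>
    obtain J2 where J2: "finite J2" "J2 \<subseteq> L" "ext k \<inter> ext n = (\<Union>k\<in>J2. ext k)"
      using FA[OF \<open>k \<in> ext la\<close> \<open>n \<in> L\<close>] by blast
    show ?thesis
    proof (rule generators_meet_or_cylinder_nbhd[OF y(1) \<open>k \<in> y\<close> y(4) J2])
      fix k2 assume "k2 \<in> J2" "k2 \<in> y"
      then have "k2 \<in> ext k" "k2 \<in> ext n"
        using generator_in_ext_Int[OF _ J2(2,3)] by blast+
      moreover have "ext k \<subseteq> ext m"
        using ext_trans[OF \<open>m \<in> L\<close> \<open>k \<in> ext m\<close>] .
      ultimately have "prec L r s c m k2" "prec L r s c n k2"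
        unfolding prec_def by auto
      with no_ub \<open>k2 \<in> y\<close> show ?thesis
        by blast
    qed
  qed
qed

lemma cylinder_nbhd_outside_cylZ:
  assumes la: "la \<in> FA L r s c" and y: "y \<subseteq> L" "y \<notin> cylZ L r s c la"
  shows "cylinder_nbhd L y (- cylZ L r s c la)"
proof -
  have "la \<in> L"
    using la unfolding FA_def by blast
  have filters_nbhd: "cylinder_nbhd L y (- cylZ L r s c la)"
    if "cylinder_nbhd L y (- filters L r s c)"
    using that by (rule cylinder_nbhd_mono) (auto simp: cylZ_def)
  consider "la \<notin> y"
    | "\<not> (\<forall>e\<in>L. \<forall>m\<in>y. prec L r s c e m \<longrightarrow> e \<in> y)"
    | "la \<in> y" "\<not> (\<forall>m\<in>y. \<forall>n\<in>y. \<exists>e\<in>y. prec L r s c m e \<and> prec L r s c n e)"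
    using y unfolding cylZ_def filters_def by auto
  then show ?thesis
  proof cases
    case 1
    then have "y \<in> cylinder L {} {la}" "cylinder L {} {la} \<subseteq> - cylZ L r s c la"
      using y unfolding cylinder_def cylZ_def by auto
    then show ?thesis
      unfolding cylinder_nbhd_def using \<open>la \<in> L\<close> by (intro exI[of _ "{}"] exI[of _ "{la}"]) auto
  next
    case 2
    then obtain e m where "e \<in> L" "m \<in> y" "prec L r s c e m" "e \<notin> y"
      by blast
    then have "y \<in> cylinder L {m} {e}" "cylinder L {m} {e} \<subseteq> - filters L r s c"
      using y unfolding cylinder_def filters_def by auto
    with \<open>e \<in> L\<close> \<open>m \<in> y\<close> y have "cylinder_nbhd L y (- filters L r s c)"
      unfolding cylinder_nbhd_def by (intro exI[of _ "{m}"] exI[of _ "{e}"]) auto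
    then show ?thesis
      by (rule filters_nbhd)
  next
    case 3
    then obtain m n where "m \<in> y" "n \<in> y" "\<not> (\<exists>e\<in>y. prec L r s c m e \<and> prec L r s c n e)"
      by blast
    with la y 3(1) show ?thesis
      using cylinder_nbhd_non_directed filters_nbhd by blast
  qed
qed

lemma compactin_cylZ_if_FA:
  assumes "la \<in> FA L r s c" shows "compactin (powerset_top L) (cylZ L r s c la)"
proof -
  have "closedin (powerset_top L) (cylZ L r s c la)"
  proof (rule closedin_powerset_top_if_cylinder_nbhds)
    show "cylZ L r s c la \<subseteq> Pow L"
      unfolding cylZ_def using filters_subset by blast
  qed (rule cylinder_nbhd_outside_cylZ[OF assms])
  then show ?thesis
    by (meson closed_compactin closedin_subset compact_space_def compact_space_powerset_top)
qed

lemma finite_antichain_if_compactin_cylZ: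
  assumes cpt: "compactin (powerset_top L) (cylZ L r s c la)"
    and la: "la \<in> L" and \<mu>: "\<mu> \<in> ext la" and \<nu>: "\<nu> \<in> L"
    and M: "M \<subseteq> ext \<mu> \<inter> ext \<nu>" "ext \<mu> \<inter> ext \<nu> = (\<Union>k\<in>M. ext k)"
    and antichain: "\<And>k k'. k \<in> M \<Longrightarrow> k' \<in> M \<Longrightarrow> k' \<in> ext k \<Longrightarrow> k' = k"
  shows "finite M"
proof -
  define \<U> where "\<U> = {cylinder L {} {\<mu>}, cylinder L {} {\<nu>}} \<union> (\<lambda>k. cylinder L {k} {}) ` M"
  have "\<mu> \<in> L"
    using \<mu> ext_subset[OF la] by blast
  then have M_sub: "M \<subseteq> L"
    using M(1) ext_subset by blast
  have "openin (powerset_top L) U" if "U \<in> \<U>" for U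
    using that \<open>\<mu> \<in> L\<close> \<nu> M_sub unfolding \<U>_def by (auto intro!: openin_powerset_top_cylinder)
  moreover have "cylZ L r s c la \<subseteq> \<Union>\<U>"
    using filters_subset_generator_cover[OF M_sub M(2)] unfolding \<U>_def cylZ_def by blast
  ultimately obtain \<F> where \<F>: "finite \<F>" "\<F> \<subseteq> \<U>" "cylZ L r s c la \<subseteq> \<Union>\<F>"
    using compactinD[OF cpt, of \<U>] by blast
  \<comment> \<open>The principal filter of k \<in> M lies in Z(la), but in no member of \<U> other than "k \<in> x".\<close>
  have "cylinder L {k} {} \<in> \<F>" if "k \<in> M" for k
  proof -
    let ?y = "principal_filter L r s c k"
    have "k \<in> L" "k \<in> ext \<mu>" "k \<in> ext \<nu>"
      using that M_sub M(1) by auto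
    then have "la \<in> ?y" "\<mu> \<in> ?y" "\<nu> \<in> ?y"
      using ext_trans[OF la \<mu>] la \<open>\<mu> \<in> L\<close> \<nu> unfolding principal_filter_def by auto
    then have "?y \<in> cylZ L r s c la"
      using principal_filter_in_filters[OF \<open>k \<in> L\<close>] unfolding cylZ_def by blast
    then obtain X where "X \<in> \<F>" "?y \<in> X"
      using \<F>(3) by blast
    with \<F>(2) \<open>\<mu> \<in> ?y\<close> \<open>\<nu> \<in> ?y\<close> obtain k' where "k' \<in> M" "X = cylinder L {k'} {}"
      unfolding \<U>_def cylinder_def by auto
    with \<open>?y \<in> X\<close> have "k \<in> ext k'"
      unfolding cylinder_def principal_filter_def by auto
    with antichain[OF \<open>k' \<in> M\<close> that] \<open>X \<in> \<F>\<close> \<open>X = cylinder L {k'} {}\<close> show ?thesis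
      by simp
  qed
  then have "(\<lambda>k. cylinder L {k} {}) ` M \<subseteq> \<F>"
    by blast
  with \<F>(1) inj_on_subset[OF inj_on_cylinder_singleton M_sub] show "finite M"
    by (meson finite_imageD finite_subset)
qed

end

definition wqlo_lub :: "('q, 'm) monoid_scheme \<Rightarrow> 'q set \<Rightarrow> 'q \<Rightarrow> 'q \<Rightarrow> 'q \<Rightarrow> bool" where
  "wqlo_lub G P p q l \<longleftrightarrow> l \<in> P \<and> wqlo_le G P p l \<and> wqlo_le G P q l
     \<and> (\<forall>t\<in>P. wqlo_le G P p t \<and> wqlo_le G P q t \<longrightarrow> wqlo_le G P l t)"

lemma wqlo_lub_exists:
  assumes "wqlo G P" "p \<in> P" "q \<in> P" "t \<in> P" "wqlo_le G P p t" "wqlo_le G P q t"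
  obtains l where "wqlo_lub G P p q l"
proof -
  have "\<forall>p\<in>P. \<forall>q\<in>P. (\<exists>t\<in>P. wqlo_le G P p t \<and> wqlo_le G P q t) \<longrightarrow>
      (\<exists>l\<in>P. wqlo_le G P p l \<and> wqlo_le G P q l \<and>
         (\<forall>t\<in>P. wqlo_le G P p t \<and> wqlo_le G P q t \<longrightarrow> wqlo_le G P l t))"
    using assms(1) unfolding wqlo_def by (elim conjE) assumption
  with assms(2-6) that show ?thesis
    unfolding wqlo_lub_def by blast
qed

locale P_graph_wqlo =
  fixes G :: "('q, 'm) monoid_scheme" and P :: "'q set"
    and L :: "'a set" and r s :: "'a \<Rightarrow> 'a" and c :: "'a \<Rightarrow> 'a \<Rightarrow> 'a" and d :: "'a \<Rightarrow> 'q"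
  assumes wqlo: "wqlo G P" and P_graph: "P_graph G P L r s c d"
begin

sublocale small_cat L r s c
  using P_graph unfolding P_graph_def by unfold_locales blast

sublocale G: group G
  using wqlo unfolding wqlo_def by blast

lemma degree_in_P: "a \<in> L \<Longrightarrow> d a \<in> P"
  using P_graph unfolding P_graph_def by blast

lemma degree_in_carrier: "a \<in> L \<Longrightarrow> d a \<in> carrier G"
  using degree_in_P wqlo unfolding wqlo_def by blast

lemma degree_source: "a \<in> L \<Longrightarrow> d (s a) = \<one>\<^bsub>G\<^esub>"
  using P_graph unfolding P_graph_def by blast

lemma degree_comp: "a \<in> L \<Longrightarrow> b \<in> L \<Longrightarrow> s a = r b \<Longrightarrow> d (c a b) = d a \<otimes>\<^bsub>G\<^esub> d b"
  using P_graph unfolding P_graph_def by blast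

lemma unique_factorisation:
  "\<forall>a\<in>L. \<forall>p\<in>P. \<forall>q\<in>P. d a = p \<otimes>\<^bsub>G\<^esub> q \<longrightarrow>
     (\<exists>!(a1, a2). a1 \<in> L \<and> a2 \<in> L \<and> s a1 = r a2 \<and> a = c a1 a2 \<and> d a1 = p \<and> d a2 = q)"
  using P_graph unfolding P_graph_def by (elim conjE) assumption

lemma factorisation_exists:
  assumes "a \<in> L" "p \<in> P" "q \<in> P" "d a = p \<otimes>\<^bsub>G\<^esub> q"
  obtains a1 a2 where "a1 \<in> L" "a2 \<in> L" "s a1 = r a2" "a = c a1 a2" "d a1 = p" "d a2 = q"
proof -
  obtain z where "case z of (a1, a2) \<Rightarrow>
      a1 \<in> L \<and> a2 \<in> L \<and> s a1 = r a2 \<and> a = c a1 a2 \<and> d a1 = p \<and> d a2 = q"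
    using unique_factorisation[rule_format, OF assms] by (rule ex1E)
  with that show ?thesis
    by (cases z) auto
qed

lemma factorisation_unique:
  assumes a: "a1 \<in> L" "a2 \<in> L" "s a1 = r a2" and b: "b1 \<in> L" "b2 \<in> L" "s b1 = r b2"
    and eq: "c a1 a2 = c b1 b2" "d a1 = d b1" "d a2 = d b2"
  shows "a1 = b1" "a2 = b2"
proof -
  let ?a = "c a1 a2"
  have "?a \<in> L" "d ?a = d a1 \<otimes>\<^bsub>G\<^esub> d a2"
    using a comp_closed degree_comp by simp_all
  then have "\<exists>!(x, y). x \<in> L \<and> y \<in> L \<and> s x = r y \<and> ?a = c x y \<and> d x = d a1 \<and> d y = d a2"
    using unique_factorisation[rule_format, OF _ degree_in_P[OF a(1)] degree_in_P[OF a(2)]]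
    by simp
  then have "(a1, a2) = (b1, b2)"
    by (rule Uniq_D[OF ex1_iff_ex_Uniq[THEN iffD1, THEN conjunct2]]) (use a b eq in simp_all)
  then show "a1 = b1" "a2 = b2"
    by simp_all
qed

lemma degree_le_ext:
  assumes "a \<in> L" "b \<in> ext a" shows "wqlo_le G P (d a) (d b)"
proof -
  obtain t where "t \<in> L" "s a = r t" "b = c a t"
    using assms(2) unfolding ext_set_def by auto
  with assms(1) show ?thesis
    unfolding wqlo_le_def using degree_comp degree_in_P by auto
qed

lemma degree_one_imp_identity:
  assumes "t \<in> L" "d t = \<one>\<^bsub>G\<^esub>" shows "r t = t"
proof -
  have "d (r t) = \<one>\<^bsub>G\<^esub>"
    using degree_source[OF id_closed(1)] id_source_range(1) assms(1) by metis
  moreover have "c (r t) t = c t (s t)"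
    using id_comp assms(1) by simp
  ultimately show ?thesis
    using factorisation_unique(1)[of "r t" t t "s t"] assms id_closed id_source_range degree_source
    by simp
qed

lemma ext_eq_if_degree_eq:
  assumes k: "k \<in> L" and k': "k' \<in> ext k" and eq: "d k' = d k"
  shows "k' = k"
proof -
  obtain t where t: "t \<in> L" "s k = r t" "k' = c k t"
    using k' unfolding ext_set_def by auto
  then have "d k \<otimes>\<^bsub>G\<^esub> d t = d k"
    using degree_comp k eq by simp
  then have "d t = \<one>\<^bsub>G\<^esub>"
    using degree_in_carrier k t(1) by simp
  then have "s k = t"
    using degree_one_imp_identity[OF t(1)] t(2) by simp
  with t(3) id_comp(2)[OF k] show ?thesis
    by simp
qed

lemma factor_ext_through_degree:
  assumes \<mu>: "\<mu> \<in> L" and \<eta>: "\<eta> \<in> ext \<mu>" and pq: "p \<in> P" "q \<in> P"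
    and l: "d \<mu> \<otimes>\<^bsub>G\<^esub> p = l" "l \<otimes>\<^bsub>G\<^esub> q = d \<eta>"
  obtains k a where "k \<in> ext \<mu>" "d k = l" "a \<in> L" "s k = r a" "\<eta> = c k a" "d a = q"
proof -
  obtain a where a: "a \<in> L" "s \<mu> = r a" "\<eta> = c \<mu> a"
    using \<eta> unfolding ext_set_def by auto
  have pq_carrier: "p \<in> carrier G" "q \<in> carrier G"
    using pq wqlo unfolding wqlo_def by auto
  have "d \<mu> \<otimes>\<^bsub>G\<^esub> d a = d \<eta>"
    using degree_comp[OF \<mu> a(1,2)] a(3) by simp
  also have "\<dots> = (d \<mu> \<otimes>\<^bsub>G\<^esub> p) \<otimes>\<^bsub>G\<^esub> q"
    using l by simp
  also have "\<dots> = d \<mu> \<otimes>\<^bsub>G\<^esub> (p \<otimes>\<^bsub>G\<^esub> q)"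
    using G.m_assoc degree_in_carrier[OF \<mu>] pq_carrier by simp
  finally have "d \<mu> \<otimes>\<^bsub>G\<^esub> d a = d \<mu> \<otimes>\<^bsub>G\<^esub> (p \<otimes>\<^bsub>G\<^esub> q)" .
  then have "d a = p \<otimes>\<^bsub>G\<^esub> q"
    using degree_in_carrier \<mu> a(1) pq_carrier by simp
  then obtain a1 a2 where f: "a1 \<in> L" "a2 \<in> L" "s a1 = r a2" "a = c a1 a2" "d a1 = p" "d a2 = q"
    using factorisation_exists[OF a(1) pq] by blast
  have a1: "s \<mu> = r a1"
    using a(2) f(4) range_comp[OF f(1-3)] by simp
  show ?thesis
  proof (rule that[OF _ _ f(2) _ _ f(6)])
    show "c \<mu> a1 \<in> ext \<mu>"
      unfolding ext_set_def using f(1) a1 by auto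
    show "d (c \<mu> a1) = l"
      using degree_comp[OF \<mu> f(1) a1] f(5) l(1) by simp
    show "s (c \<mu> a1) = r a2"
      using source_comp[OF \<mu> f(1) a1] f(3) by simp
    show "\<eta> = c (c \<mu> a1) a2"
      using comp_assoc[OF \<mu> f(1,2) a1 f(3)] a(3) f(4) by simp
  qed
qed

lemma common_ext_through_lub:
  assumes \<mu>: "\<mu> \<in> L" and \<nu>: "\<nu> \<in> L" and lub: "wqlo_lub G P (d \<mu>) (d \<nu>) l"
    and \<eta>: "\<eta> \<in> ext \<mu> \<inter> ext \<nu>"
  obtains k where "k \<in> ext \<mu> \<inter> ext \<nu>" "d k = l" "\<eta> \<in> ext k"
proof -
  have "\<eta> \<in> L"
    using \<eta> ext_subset[OF \<mu>] by blast
  have "wqlo_le G P (d \<mu>) (d \<eta>)" "wqlo_le G P (d \<nu>) (d \<eta>)"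
    using degree_le_ext \<mu> \<nu> \<eta> by blast+
  then have "wqlo_le G P l (d \<eta>)"
    using lub degree_in_P[OF \<open>\<eta> \<in> L\<close>] unfolding wqlo_lub_def by blast
  then obtain q where q: "q \<in> P" "l \<otimes>\<^bsub>G\<^esub> q = d \<eta>"
    unfolding wqlo_le_def by blast
  obtain p1 p2 where p: "p1 \<in> P" "d \<mu> \<otimes>\<^bsub>G\<^esub> p1 = l" "p2 \<in> P" "d \<nu> \<otimes>\<^bsub>G\<^esub> p2 = l"
    using lub unfolding wqlo_lub_def wqlo_le_def by blast
  obtain k a where k: "k \<in> ext \<mu>" "d k = l" "a \<in> L" "s k = r a" "\<eta> = c k a" "d a = q"
    using factor_ext_through_degree[OF \<mu> _ p(1) q(1) p(2) q(2)] \<eta> by blast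
  obtain k' b where k': "k' \<in> ext \<nu>" "d k' = l" "b \<in> L" "s k' = r b" "\<eta> = c k' b" "d b = q"
    using factor_ext_through_degree[OF \<nu> _ p(3) q(1) p(4) q(2)] \<eta> by blast
  \<comment> \<open>Both are factorisations of \<eta> of degrees l and q, so they coincide.\<close>
  have "k \<in> L" "k' \<in> L"
    using k(1) k'(1) ext_subset \<mu> \<nu> by blast+
  then have "k = k'"
    using factorisation_unique(1)[of k a k' b] k k' by simp
  moreover have "\<eta> \<in> ext k"
    using k unfolding ext_set_def by auto
  ultimately show ?thesis
    using that k(1,2) k'(1) by blast
qed

lemma ext_Int_eq_Union_lub_degree:
  assumes "\<mu> \<in> L" "\<nu> \<in> L" "wqlo_lub G P (d \<mu>) (d \<nu>) l"
  shows "ext \<mu> \<inter> ext \<nu> = (\<Union>k\<in>{k \<in> ext \<mu> \<inter> ext \<nu>. d k = l}. ext k)"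
proof
  show "ext \<mu> \<inter> ext \<nu> \<subseteq> (\<Union>k\<in>{k \<in> ext \<mu> \<inter> ext \<nu>. d k = l}. ext k)"
    using common_ext_through_lub[OF assms] by blast
  show "(\<Union>k\<in>{k \<in> ext \<mu> \<inter> ext \<nu>. d k = l}. ext k) \<subseteq> ext \<mu> \<inter> ext \<nu>"
    using ext_trans assms(1,2) by blast
qed

lemma ext_Int_finitely_generated_if_compactin_cylZ:
  assumes la: "la \<in> L" and cpt: "compactin (powerset_top L) (cylZ L r s c la)"
    and \<mu>: "\<mu> \<in> ext la" and \<nu>: "\<nu> \<in> L"
  obtains J where "finite J" "J \<subseteq> L" "ext \<mu> \<inter> ext \<nu> = (\<Union>k\<in>J. ext k)"
proof (cases "ext \<mu> \<inter> ext \<nu> = {}")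
  case True
  then show ?thesis
    using that[of "{}"] by simp
next
  case False
  have "\<mu> \<in> L"
    using \<mu> ext_subset[OF la] by blast
  from False obtain e where "e \<in> ext \<mu>" "e \<in> ext \<nu>"
    by blast
  moreover have "e \<in> L"
    using \<open>e \<in> ext \<mu>\<close> ext_subset[OF \<open>\<mu> \<in> L\<close>] by blast
  ultimately obtain l where lub: "wqlo_lub G P (d \<mu>) (d \<nu>) l"
    using wqlo_lub_exists[OF wqlo degree_in_P[OF \<open>\<mu> \<in> L\<close>] degree_in_P[OF \<nu>]
        degree_in_P[OF \<open>e \<in> L\<close>] degree_le_ext[OF \<open>\<mu> \<in> L\<close>] degree_le_ext[OF \<nu>]]
    by blast
  define M where "M = {k \<in> ext \<mu> \<inter> ext \<nu>. d k = l}"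
  have M_sub: "M \<subseteq> ext \<mu> \<inter> ext \<nu>" "M \<subseteq> L"
    using ext_subset[OF \<open>\<mu> \<in> L\<close>] unfolding M_def by blast+
  have cover: "ext \<mu> \<inter> ext \<nu> = (\<Union>k\<in>M. ext k)"
    unfolding M_def by (rule ext_Int_eq_Union_lub_degree[OF \<open>\<mu> \<in> L\<close> \<nu> lub])
  have "k' = k" if "k \<in> M" "k' \<in> M" "k' \<in> ext k" for k k'
  proof (rule ext_eq_if_degree_eq[OF _ that(3)])
    show "k \<in> L"
      using that(1) M_sub(2) by blast
    show "d k' = d k"
      using that(1,2) unfolding M_def by simp
  qed
  then have "finite M"
    using finite_antichain_if_compactin_cylZ[OF cpt la \<mu> \<nu> M_sub(1) cover] by blast
  from this M_sub(2) cover show ?thesis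
    by (rule that)
qed

lemma FA_if_compactin_cylZ:
  assumes "la \<in> L" "compactin (powerset_top L) (cylZ L r s c la)"
  shows "la \<in> FA L r s c"
  unfolding FA_def
proof (intro CollectI conjI ballI assms(1))
  fix \<mu> \<nu> assume "\<mu> \<in> ext la" "\<nu> \<in> L"
  then obtain J where "finite J" "J \<subseteq> L" "ext \<mu> \<inter> ext \<nu> = (\<Union>k\<in>J. ext k)"
    by (rule ext_Int_finitely_generated_if_compactin_cylZ[OF assms])
  then show "\<exists>J. finite J \<and> J \<subseteq> L \<and> ext \<mu> \<inter> ext \<nu> = (\<Union>k\<in>J. ext k)"
    by (intro exI[of _ J]) simp
qed

end

theorem lemma4p8:
  fixes G :: "('q, 'm) monoid_scheme" and P :: "'q set"
    and L :: "'a set" and r s :: "'a \<Rightarrow> 'a" and c :: "'a \<Rightarrow> 'a \<Rightarrow> 'a" and d :: "'a \<Rightarrow> 'q"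
    and la :: 'a
  assumes "wqlo G P"
    and "P_graph G P L r s c d"
    and "FA L r s c \<noteq> {}"
    and "la \<in> L"
  shows "la \<in> FA L r s c \<longleftrightarrow> compactin (filter_top L r s c) (cylZ L r s c la)"
proof -
  interpret P_graph_wqlo G P L r s c d
    using assms(1,2) by unfold_locales
  have "cylZ L r s c la \<subseteq> filters L r s c"
    unfolding cylZ_def by blast
  then have "compactin (filter_top L r s c) (cylZ L r s c la)
      \<longleftrightarrow> compactin (powerset_top L) (cylZ L r s c la)"
    unfolding filter_top_def compactin_subtopology by blast
  with assms(4) show ?thesis
    using compactin_cylZ_if_FA FA_if_compactin_cylZ by blast
qed

end
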